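(* Let $X$ be an Alexandroff space, $Y$ a topological space, and $f:X\to Y$ a map with closed graph. Then $f$ is continuous.
   Context: For a map $f:X\to Y$ its graph is $G_f=\{(x,f(x)):x\in X\}$; $f$ has closed graph if $G_f$ is closed in $X\times Y$ (product topology). A topological space $X$ is an Alexandroff space if the intersection of every nonempty family of open subsets of $X$ is open; equivalently, every point $a\in X$ has a smallest open neighbourhood, denoted $V_a$. *)

theory Defs
  imports "HOL-Analysis.Analysis"
begin

definition alexandroff_space :: "'a topology \<Rightarrow> bool" where
  "alexandroff_space X \<longleftrightarrow>
     (\<forall>\<F>. \<F> \<noteq> {} \<and> (\<forall>U\<in>\<F>. openin X U) \<longrightarrow> openin X (\<Inter>\<F>))"

definition graph_on :: "'a topology \<Rightarrow> ('a \<Rightarrow> 'b) \<Rightarrow> ('a \<times> 'b) set" where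
  "graph_on X f = {(x, f x) | x. x \<in> topspace X}"

end

theory Submission
  imports Defs
begin

text \<open>In an Alexandroff space every point x has a smallest open neighbourhood V x, and a map is
continuous as soon as it is constant on each V x. A closed graph forces exactly this: if y \<in> V x
and f y \<noteq> f x, then (x, f y) lies off the graph, so some open box U \<times> W around it misses the
graph; but y \<in> V x \<subseteq> U and f y \<in> W put (y, f y) into that box.\<close>

definition minimal_nbhd :: "'a topology \<Rightarrow> 'a \<Rightarrow> 'a set" where
  "minimal_nbhd X x = \<Inter>{U. openin X U \<and> x \<in> U}"

lemma minimal_nbhd_subset:
  assumes "openin X U" and "x \<in> U"
  shows "minimal_nbhd X x \<subseteq> U"
  using assms by (auto simp: minimal_nbhd_def)

lemma in_minimal_nbhd_self: "x \<in> minimal_nbhd X x"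
  by (simp add: minimal_nbhd_def)

lemma minimal_nbhd_subset_topspace:
  assumes "x \<in> topspace X"
  shows "minimal_nbhd X x \<subseteq> topspace X"
  using assms by (simp add: minimal_nbhd_subset)

lemma openin_minimal_nbhd:
  assumes "alexandroff_space X" and "x \<in> topspace X"
  shows "openin X (minimal_nbhd X x)"
  unfolding minimal_nbhd_def
proof (rule assms(1)[unfolded alexandroff_space_def, rule_format, OF conjI])
  show "{U. openin X U \<and> x \<in> U} \<noteq> {}"
    using assms(2) by auto
qed auto

lemma continuous_map_if_constant_on_minimal_nbhds:
  assumes "alexandroff_space X"
    and "f \<in> topspace X \<rightarrow> topspace Y"
    and "\<And>x y. x \<in> topspace X \<Longrightarrow> y \<in> minimal_nbhd X x \<Longrightarrow> f y = f x"
  shows "continuous_map X Y f"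
  unfolding continuous_map_def
proof (intro conjI allI impI)
  show "f \<in> topspace X \<rightarrow> topspace Y"
    by fact
  fix W
  show "openin X {x \<in> topspace X. f x \<in> W}"
  proof (subst openin_subopen, intro ballI)
    fix x
    assume x: "x \<in> {x \<in> topspace X. f x \<in> W}"
    then have xX: "x \<in> topspace X" and fx: "f x \<in> W"
      by auto
    have "f y \<in> W" if "y \<in> minimal_nbhd X x" for y
      using assms(3)[OF xX that] fx by simp
    then have "minimal_nbhd X x \<subseteq> {x \<in> topspace X. f x \<in> W}"
      using minimal_nbhd_subset_topspace[OF xX] by auto
    moreover have "openin X (minimal_nbhd X x)"
      using assms(1) xX by (rule openin_minimal_nbhd)
    ultimately show "\<exists>T. openin X T \<and> x \<in> T \<and> T \<subseteq> {x \<in> topspace X. f x \<in> W}"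
      using in_minimal_nbhd_self[of x X] by blast
  qed
qed

lemma closed_graph_imp_constant_on_minimal_nbhd:
  assumes "f \<in> topspace X \<rightarrow> topspace Y"
    and "closedin (prod_topology X Y) (graph_on X f)"
    and x: "x \<in> topspace X" and y: "y \<in> minimal_nbhd X x"
  shows "f y = f x"
proof (rule ccontr)
  assume "f y \<noteq> f x"
  have yX: "y \<in> topspace X"
    using y minimal_nbhd_subset_topspace[OF x] by blast
  then have "(x, f y) \<in> topspace (prod_topology X Y) - graph_on X f"
    using x assms(1) \<open>f y \<noteq> f x\<close> by (auto simp: graph_on_def)
  moreover have "openin (prod_topology X Y) (topspace (prod_topology X Y) - graph_on X f)"
    using assms(2) by (simp add: closedin_def)
  ultimately obtain U W where "openin X U" "x \<in> U" "f y \<in> W"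
      and box: "U \<times> W \<subseteq> topspace (prod_topology X Y) - graph_on X f"
    by (metis openin_prod_topology_alt)
  then have "(y, f y) \<in> U \<times> W"
    using y minimal_nbhd_subset[of X U x] by blast
  moreover have "(y, f y) \<in> graph_on X f"
    using yX by (auto simp: graph_on_def)
  ultimately show False
    using box by blast
qed

theorem theorem3p2:
  fixes X :: "'a topology" and Y :: "'b topology" and f :: "'a \<Rightarrow> 'b"
  assumes "alexandroff_space X"
    and "f \<in> topspace X \<rightarrow> topspace Y"
    and "closedin (prod_topology X Y) (graph_on X f)"
  shows "continuous_map X Y f"
  using assms(1,2)
proof (rule continuous_map_if_constant_on_minimal_nbhds)
  fix x y
  assume "x \<in> topspace X" and "y \<in> minimal_nbhd X x"
  with assms(2,3) show "f y = f x"
    by (rule closed_graph_imp_constant_on_minimal_nbhd)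
qed

end
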